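(* Let $n,d\ge 2$ and $\mathbf h\in\mathbb{R}^{\binom{n+d-1}{d}}$ with $N(\mathbf h)\ge 1$ and $J_{n,d}\mathbf h\ge 0$. Define $\boldsymbol\gamma_0=\mathbf h_0$ and $\boldsymbol\gamma_i=J_{n-1,i-1}\mathbf h_{i-1}+\mathbf h_i$ for $1\le i\le d$. If exactly one of the numbers $R(\boldsymbol\gamma_0),\dots,R(\boldsymbol\gamma_d)$ is nonzero, then $$R(J_{n,d}\mathbf h)\ge \binom{n+1}{3}+1.$$
   Context: For a real vector $\mathbf x$, $N(\mathbf x)$ and $R(\mathbf x)$ denote the numbers of negative and nonzero components; inequalities are componentwise. $J_{m,j}$ is the matrix, with respect to the left lexicographic bases of degree-$j$ and degree-$(j+1)$ monomials in $m$ variables, of multiplication by the sum of the variables ($J_{n,j}$ in $x_1,\dots,x_n$, $J_{n-1,j}$ in $x_2,\dots,x_n$). If $\mathbf h$ is the coordinate vector of $A(x)=\sum_{j=0}^d x_1^{d-j}A_j(x_2,\dots,x_n)$ ($A_j$ homogeneous of degree $j$), then $\mathbf h_j$ is the coordinate vector of $A_j$ in the left lexicographic basis of degree-$j$ monomials in $x_2,\dots,x_n$, and $\mathbf h=(\mathbf h_0,\dots,\mathbf h_d)$. *)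

theory Defs
  imports Complex_Main
begin

text \<open>Monomials are represented by exponent vectors \<open>nat \<Rightarrow> nat\<close>; variable x_(k+1)
  corresponds to index k.  \<open>mons V j\<close> is the set of monomials of degree j in the
  variables indexed by the finite set V.  A coordinate vector with respect to the
  (left lexicographic) monomial basis is represented by the function assigning to each
  monomial its coordinate; only its values on the relevant monomial set matter.\<close>

definition mons :: "nat set \<Rightarrow> nat \<Rightarrow> (nat \<Rightarrow> nat) set" where
  "mons V j = {\<alpha>. (\<forall>i. i \<notin> V \<longrightarrow> \<alpha> i = 0) \<and> (\<Sum>i\<in>V. \<alpha> i) = j}"

text \<open>Multiplication by the sum of the variables in V (the matrix J):
  coordinate of the product at monomial beta.\<close>
definition Jmul :: "nat set \<Rightarrow> ((nat \<Rightarrow> nat) \<Rightarrow> real) \<Rightarrow> (nat \<Rightarrow> nat) \<Rightarrow> real" where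
  "Jmul V h \<beta> = (\<Sum>i\<in>V. if 1 \<le> \<beta> i then h (\<beta>(i := \<beta> i - 1)) else 0)"

definition Nneg :: "(nat \<Rightarrow> nat) set \<Rightarrow> ((nat \<Rightarrow> nat) \<Rightarrow> real) \<Rightarrow> nat" where
  "Nneg D x = card {\<alpha>\<in>D. x \<alpha> < 0}"

definition Rnz :: "(nat \<Rightarrow> nat) set \<Rightarrow> ((nat \<Rightarrow> nat) \<Rightarrow> real) \<Rightarrow> nat" where
  "Rnz D x = card {\<alpha>\<in>D. x \<alpha> \<noteq> 0}"

text \<open>\<open>hpart d h j\<close>: the block h_j, i.e. the coordinates of A_j in the monomials of
  degree j in x_2..x_n (indices 1..n-1): coefficient of x_1^(d-j) * beta in A.\<close>
definition hpart :: "nat \<Rightarrow> ((nat \<Rightarrow> nat) \<Rightarrow> real) \<Rightarrow> nat \<Rightarrow> (nat \<Rightarrow> nat) \<Rightarrow> real" where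
  "hpart d h j \<beta> = h (\<beta>(0 := d - j))"

definition gam :: "nat \<Rightarrow> nat \<Rightarrow> ((nat \<Rightarrow> nat) \<Rightarrow> real) \<Rightarrow> nat \<Rightarrow> (nat \<Rightarrow> nat) \<Rightarrow> real" where
  "gam n d h i = (if i = 0 then hpart d h 0
     else (\<lambda>\<beta>. Jmul {1..<n} (hpart d h (i - 1)) \<beta> + hpart d h i \<beta>))"

end

theory Submission
  imports Defs "HOL-Library.Multiset"
begin

text \<open>Write A = sum_j x_1^(d-j) A_j and let J be multiplication by x_2 + ... + x_n. The
  coefficient block of (x_1 + ... + x_n) A at x_1^(d+1-i) is gamma_i = J h_(i-1) + h_i, and
  the block at x_1^0 is J h_d. If gamma_k is the only nonzero block, then h_j = 0 for j < k
  and h_(k+t) = (-1)^t J^t gamma_k, where gamma_k >= 0 has a positive entry at some monomial a.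
  Since J preserves nonnegativity and spreads positivity from a to all its multiples, the
  blocks h_(k+t) alternate in sign, and J h_d = (-1)^(d-k) J^(d-k+1) gamma_k is nonzero at
  every a m with deg m = d-k+1. Nonnegativity of J h forces d-k to be even, while the negative
  entry of h lies in a block h_j with j-k odd; hence d-k >= 2. The monomials a m, together
  with x_1^(d+1-k) a, give at least binom(n+1,3) + 1 nonzero entries of J h.\<close>

lemma mons_eq_count_image:
  assumes "finite V"
  shows "mons V j = count ` multisets_of_size V j"
proof (intro equalityI subsetI)
  fix \<alpha> assume \<alpha>: "\<alpha> \<in> mons V j"
  define M where "M = Abs_multiset \<alpha>"
  have "{x. 0 < \<alpha> x} \<subseteq> V"
    using \<alpha> by (auto simp: mons_def)
  then have count_M: "count M = \<alpha>"
    unfolding M_def using assms by (intro count_Abs_multiset) (rule finite_subset)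
  have set_M: "set_mset M \<subseteq> V"
    using \<alpha> by (auto simp: mons_def set_mset_def count_M)
  have "size M = sum \<alpha> (set_mset M)"
    by (simp add: size_multiset_overloaded_eq count_M)
  also have "\<dots> = sum \<alpha> V"
    using set_M assms by (intro sum.mono_neutral_left) (auto simp: set_mset_def count_M)
  also have "\<dots> = j"
    using \<alpha> by (simp add: mons_def)
  finally have "M \<in> multisets_of_size V j"
    using set_M by (simp add: multisets_of_size_def)
  then show "\<alpha> \<in> count ` multisets_of_size V j"
    using count_M by blast
next
  fix \<alpha> assume "\<alpha> \<in> count ` multisets_of_size V j"
  then obtain M where M: "set_mset M \<subseteq> V" "size M = j" "\<alpha> = count M"
    by (auto simp: multisets_of_size_def)
  have "size M = sum (count M) V"
    unfolding size_multiset_overloaded_eq using M assms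
    by (intro sum.mono_neutral_left) (auto simp: count_eq_zero_iff)
  then show "\<alpha> \<in> mons V j"
    using M by (auto simp: mons_def count_eq_zero_iff)
qed

lemma finite_mons: "finite V \<Longrightarrow> finite (mons V j)"
  by (simp add: mons_eq_count_image finite_multisets_of_size)

lemma card_mons: "finite V \<Longrightarrow> card (mons V j) = (card V + j - 1) choose j"
  by (simp add: mons_eq_count_image card_image inj_on_def count_inject card_multisets_of_size)

lemma sum_fun_upd_nat:
  assumes "finite V" "i \<in> V"
  shows "sum (\<alpha>(i := x)) V = sum \<alpha> V - \<alpha> i + (x::nat)"
proof -
  have "sum (\<alpha>(i := x)) (V - {i}) = sum \<alpha> (V - {i})"
    by (rule sum.cong) auto
  then show ?thesis
    using assms by (simp add: sum.remove member_le_sum)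
qed

lemma mons_fun_upd_dec:
  assumes "finite V" "\<alpha> \<in> mons V (Suc j)" "i \<in> V" "1 \<le> \<alpha> i"
  shows "\<alpha>(i := \<alpha> i - 1) \<in> mons V j"
  using assms sum_fun_upd_nat[OF assms(1,3), of \<alpha>] member_le_sum[of i V \<alpha>]
  by (auto simp: mons_def)

lemma mons_fun_upd_add:
  assumes "finite V" "\<alpha> \<in> mons V j" "i \<in> V"
  shows "\<alpha>(i := \<alpha> i + m) \<in> mons V (j + m)"
  using assms sum_fun_upd_nat[OF assms(1,3), of \<alpha>] member_le_sum[of i V \<alpha>]
  by (auto simp: mons_def)

lemma mons_add:
  "\<alpha> \<in> mons V j \<Longrightarrow> \<gamma> \<in> mons V t \<Longrightarrow> (\<lambda>i. \<alpha> i + \<gamma> i) \<in> mons V (j + t)"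
  by (auto simp: mons_def sum.distrib)

lemma mons_0: "finite V \<Longrightarrow> mons V 0 = {\<lambda>_. 0}"
  by (auto simp: mons_def fun_eq_iff)

lemma mons_SucE:
  assumes "\<gamma> \<in> mons V (Suc t)"
  obtains i where "i \<in> V" "1 \<le> \<gamma> i"
proof -
  have "sum \<gamma> V \<noteq> 0"
    using assms by (simp add: mons_def)
  then show thesis
    using that by (metis less_one not_le sum.neutral)
qed

lemma mons_mono:
  assumes "finite W" "V \<subseteq> W"
  shows "mons V j \<subseteq> mons W j"
proof
  fix \<alpha> assume \<alpha>: "\<alpha> \<in> mons V j"
  then have "sum \<alpha> W = sum \<alpha> V"
    using assms by (intro sum.mono_neutral_right) (auto simp: mons_def)
  then show "\<alpha> \<in> mons W j"
    using \<alpha> assms(2) by (auto simp: mons_def)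
qed

lemma card_mons_mono:
  assumes "finite V" "i \<in> V" "j \<le> j'"
  shows "card (mons V j) \<le> card (mons V j')"
proof (rule card_inj_on_le)
  let ?shift = "\<lambda>\<gamma>. \<gamma>(i := \<gamma> i + (j' - j))"
  show "inj_on ?shift (mons V j)"
    by (rule inj_onI) (metis add_right_cancel fun_upd_apply fun_upd_idem_iff fun_upd_upd)
  show "?shift ` mons V j \<subseteq> mons V j'"
    using mons_fun_upd_add[OF assms(1) _ assms(2), of _ j "j' - j"] assms(3) by auto
  show "finite (mons V j')"
    using assms(1) by (rule finite_mons)
qed

lemma Jmul_cong:
  assumes "finite V" "\<And>\<alpha>. \<alpha> \<in> mons V j \<Longrightarrow> f \<alpha> = g \<alpha>" "\<beta> \<in> mons V (Suc j)"
  shows "Jmul V f \<beta> = Jmul V g \<beta>"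
  unfolding Jmul_def using assms mons_fun_upd_dec[OF assms(1,3)] by (intro sum.cong) auto

lemma Jmul_zero [simp]: "Jmul V (\<lambda>_. 0) \<beta> = 0"
  by (simp add: Jmul_def)

lemma Jmul_cmult: "Jmul V (\<lambda>\<alpha>. c * f \<alpha>) \<beta> = c * Jmul V f \<beta>"
  unfolding Jmul_def sum_distrib_left by (rule sum.cong) auto

lemma Jmul_nonneg:
  assumes "finite V" "\<forall>\<alpha>\<in>mons V j. f \<alpha> \<ge> 0" "\<beta> \<in> mons V (Suc j)"
  shows "Jmul V f \<beta> \<ge> 0"
  unfolding Jmul_def using assms mons_fun_upd_dec[OF assms(1,3)] by (intro sum_nonneg) auto

lemma Jmul_pos:
  assumes "finite V" "\<forall>\<alpha>\<in>mons V j. f \<alpha> \<ge> 0" "\<beta> \<in> mons V (Suc j)"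
    and "i \<in> V" "1 \<le> \<beta> i" "f (\<beta>(i := \<beta> i - 1)) > 0"
  shows "Jmul V f \<beta> > 0"
proof -
  let ?term = "\<lambda>l. if 1 \<le> \<beta> l then f (\<beta>(l := \<beta> l - 1)) else 0"
  have "?term i \<le> sum ?term V"
    using assms mons_fun_upd_dec[OF assms(1,3)] by (intro member_le_sum) auto
  then show ?thesis
    using assms(5,6) by (simp add: Jmul_def)
qed

lemma Jmul_power_nonneg:
  assumes "finite V" "\<forall>\<alpha>\<in>mons V k. f \<alpha> \<ge> 0" "\<beta> \<in> mons V (k + t)"
  shows "(Jmul V ^^ t) f \<beta> \<ge> 0"
  using assms(3)
proof (induction t arbitrary: \<beta>)
  case 0
  then show ?case using assms(2) by simp
next
  case (Suc t)
  then show ?case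
    using Jmul_nonneg[OF assms(1), of "k + t"] by simp
qed

lemma Jmul_power_pos:
  assumes "finite V" "\<forall>\<alpha>\<in>mons V k. f \<alpha> \<ge> 0"
    and "a \<in> mons V k" "f a > 0" "\<gamma> \<in> mons V t"
  shows "(Jmul V ^^ t) f (\<lambda>i. a i + \<gamma> i) > 0"
  using assms(5)
proof (induction t arbitrary: \<gamma>)
  case 0
  then show ?case using assms(1,4) by (simp add: mons_0)
next
  case (Suc t)
  obtain i where i: "i \<in> V" "1 \<le> \<gamma> i"
    using Suc.prems by (rule mons_SucE)
  have shift: "(\<lambda>l. a l + \<gamma> l)(i := a i + \<gamma> i - 1) = (\<lambda>l. a l + (\<gamma>(i := \<gamma> i - 1)) l)"
    using i by (auto simp: fun_eq_iff)
  have pos: "(Jmul V ^^ t) f ((\<lambda>l. a l + \<gamma> l)(i := a i + \<gamma> i - 1)) > 0"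
    unfolding shift using Suc.IH mons_fun_upd_dec[OF assms(1) Suc.prems i] .
  have mem: "(\<lambda>l. a l + \<gamma> l) \<in> mons V (Suc (k + t))"
    using mons_add[OF assms(3) Suc.prems] by simp
  have nonneg: "\<forall>\<alpha>\<in>mons V (k + t). (Jmul V ^^ t) f \<alpha> \<ge> 0"
    using Jmul_power_nonneg[OF assms(1,2)] by blast
  have "1 \<le> a i + \<gamma> i"
    using i(2) by simp
  from Jmul_pos[where f = "(Jmul V ^^ t) f" and \<beta> = "\<lambda>l. a l + \<gamma> l",
      OF assms(1) nonneg mem i(1) this pos]
  show ?case by simp
qed

lemma mons_lift_0:
  assumes "1 \<le> n" "\<beta> \<in> mons {1..<n} i"
  shows "\<beta>(0 := x) \<in> mons {0..<n} (x + i)"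
proof -
  have "{0..<n} = insert 0 {1..<n}"
    using assms(1) by auto
  moreover have "sum (\<beta>(0 := x)) {1..<n} = sum \<beta> {1..<n}"
    by (rule sum.cong) auto
  ultimately show ?thesis
    using assms(2) by (auto simp: mons_def)
qed

lemma mons_drop_0:
  assumes "\<alpha> \<in> mons {0..<n} d"
  shows "\<alpha> 0 \<le> d" and "\<alpha>(0 := 0) \<in> mons {1..<n} (d - \<alpha> 0)"
proof -
  have "sum \<alpha> {0..<n} = \<alpha> 0 + sum (\<alpha>(0 := 0)) {1..<n}"
    using assms by (cases "n = 0") (auto simp: mons_def sum.atLeast_Suc_lessThan intro!: sum.cong)
  then show "\<alpha> 0 \<le> d" "\<alpha>(0 := 0) \<in> mons {1..<n} (d - \<alpha> 0)"
    using assms by (auto simp: mons_def)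
qed

lemma Jmul_lift_0_eq_gam:
  assumes "1 \<le> n" "\<beta> \<in> mons {1..<n} i" "i \<le> d"
  shows "Jmul {0..<n} h (\<beta>(0 := d + 1 - i)) = gam n d h i \<beta>"
proof -
  have split0: "{0..<n} = insert 0 {1..<n}"
    using assms(1) by auto
  have J: "Jmul {0..<n} h (\<beta>(0 := d + 1 - i)) = hpart d h i \<beta> +
     (\<Sum>k\<in>{1..<n}. if 1 \<le> \<beta> k then h (\<beta>(0 := d + 1 - i, k := \<beta> k - 1)) else 0)"
    unfolding Jmul_def hpart_def split0 using assms(3)
    by (subst sum.insert) (auto intro!: sum.cong)
  show ?thesis
  proof (cases "i = 0")
    case True
    then have "\<forall>k\<in>{1..<n}. \<beta> k = 0"
      using assms(2) by (auto simp: mons_def)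
    then show ?thesis
      using True J by (simp add: gam_def)
  next
    case False
    have "\<beta>(0 := d + 1 - i, k := \<beta> k - 1) = \<beta>(k := \<beta> k - 1, 0 := d - (i - 1))"
      if "k \<in> {1..<n}" for k
      using that False assms(3) by (auto simp: fun_eq_iff)
    then have "(\<Sum>k\<in>{1..<n}. if 1 \<le> \<beta> k then h (\<beta>(0 := d + 1 - i, k := \<beta> k - 1)) else 0)
        = Jmul {1..<n} (hpart d h (i - 1)) \<beta>"
      unfolding Jmul_def hpart_def by (intro sum.cong) auto
    then show ?thesis
      using False J by (simp add: gam_def)
  qed
qed

lemma Jmul_eq_Jmul_hpart_top:
  assumes "1 \<le> n" "\<beta> 0 = 0"
  shows "Jmul {0..<n} h \<beta> = Jmul {1..<n} (hpart d h d) \<beta>"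
proof -
  have split0: "{0..<n} = insert 0 {1..<n}"
    using assms(1) by auto
  have "\<beta>(k := v, 0 := 0) = \<beta>(k := v)" if "1 \<le> k" for k v
    using that assms(2) by (auto simp: fun_eq_iff)
  then show ?thesis
    unfolding Jmul_def hpart_def split0 using assms by (subst sum.insert) (auto intro!: sum.cong)
qed

lemma gam_nonneg:
  assumes "1 \<le> n" "\<forall>\<beta>\<in>mons {0..<n} (d + 1). Jmul {0..<n} h \<beta> \<ge> 0"
    and "i \<le> d" "\<beta> \<in> mons {1..<n} i"
  shows "gam n d h i \<beta> \<ge> 0"
proof -
  have "\<beta>(0 := d + 1 - i) \<in> mons {0..<n} (d + 1)"
    using mons_lift_0[OF assms(1,4), of "d + 1 - i"] assms(3) by simp
  then show ?thesis
    using assms(2) Jmul_lift_0_eq_gam[OF assms(1,4,3), of h] by metis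
qed

context
  fixes n d k :: nat and h :: "(nat \<Rightarrow> nat) \<Rightarrow> real"
  assumes gam_vanish:
    "\<And>i \<beta>. i \<le> d \<Longrightarrow> i \<noteq> k \<Longrightarrow> \<beta> \<in> mons {1..<n} i \<Longrightarrow> gam n d h i \<beta> = 0"
begin

lemma hpart_vanish_below:
  assumes "j < k" "k \<le> d" "\<beta> \<in> mons {1..<n} j"
  shows "hpart d h j \<beta> = 0"
  using assms(1,3)
proof (induction j arbitrary: \<beta>)
  case 0
  then show ?case
    using gam_vanish[of 0 \<beta>] assms(2) by (simp add: gam_def)
next
  case (Suc j)
  have "Jmul {1..<n} (hpart d h j) \<beta> = Jmul {1..<n} (\<lambda>_. 0) \<beta>"
    using Suc by (intro Jmul_cong) auto
  then show ?case
    using gam_vanish[of "Suc j" \<beta>] Suc.prems assms(2) by (simp add: gam_def)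
qed

lemma hpart_eq_alternating_Jmul_power:
  assumes "k + t \<le> d" "\<beta> \<in> mons {1..<n} (k + t)"
  shows "hpart d h (k + t) \<beta> = (-1) ^ t * (Jmul {1..<n} ^^ t) (gam n d h k) \<beta>"
  using assms
proof (induction t arbitrary: \<beta>)
  case 0
  show ?case
  proof (cases k)
    case (Suc k')
    have "Jmul {1..<n} (hpart d h k') \<beta> = Jmul {1..<n} (\<lambda>_. 0) \<beta>"
      using 0 Suc hpart_vanish_below[of k'] by (intro Jmul_cong) auto
    then show ?thesis
      using Suc by (simp add: gam_def)
  qed (simp add: gam_def)
next
  case (Suc t)
  have "Jmul {1..<n} (hpart d h (k + t)) \<beta>
      = Jmul {1..<n} (\<lambda>\<alpha>. (-1) ^ t * (Jmul {1..<n} ^^ t) (gam n d h k) \<alpha>) \<beta>"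
    using Suc by (intro Jmul_cong) auto
  then show ?case
    using gam_vanish[of "k + Suc t" \<beta>] Suc.prems by (simp add: gam_def Jmul_cmult)
qed

context
  fixes a :: "nat \<Rightarrow> nat"
  assumes n_ge_2: "2 \<le> n"
    and Jmul_nonneg_top: "\<forall>\<beta>\<in>mons {0..<n} (d + 1). Jmul {0..<n} h \<beta> \<ge> 0"
    and k_le_d: "k \<le> d"
    and a_mem: "a \<in> mons {1..<n} k" and a_pos: "gam n d h k a > 0"
begin

lemma gam_k_nonneg: "\<forall>\<alpha>\<in>mons {1..<n} k. gam n d h k \<alpha> \<ge> 0"
  using gam_nonneg[OF _ Jmul_nonneg_top k_le_d] n_ge_2 by simp

lemma hpart_alternating_sign:
  assumes "k + t \<le> d" "\<beta> \<in> mons {1..<n} (k + t)"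
  shows "(-1) ^ t * hpart d h (k + t) \<beta> \<ge> 0"
  using hpart_eq_alternating_Jmul_power[OF assms]
    Jmul_power_nonneg[where f = "gam n d h k", OF _ gam_k_nonneg assms(2)] by simp

lemma Jmul_top_eq:
  assumes "\<gamma> \<in> mons {1..<n} (d - k + 1)"
  shows "Jmul {0..<n} h (\<lambda>i. a i + \<gamma> i)
    = (-1) ^ (d - k) * (Jmul {1..<n} ^^ (d - k + 1)) (gam n d h k) (\<lambda>i. a i + \<gamma> i)"
proof -
  have d_eq: "k + (d - k) = d"
    using k_le_d by simp
  have mem: "(\<lambda>i. a i + \<gamma> i) \<in> mons {1..<n} (Suc d)"
    using mons_add[OF a_mem assms] d_eq by simp
  have "(\<lambda>i. a i + \<gamma> i) 0 = 0"
    using a_mem assms by (simp add: mons_def)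
  then have "Jmul {0..<n} h (\<lambda>i. a i + \<gamma> i) = Jmul {1..<n} (hpart d h d) (\<lambda>i. a i + \<gamma> i)"
    using n_ge_2 by (intro Jmul_eq_Jmul_hpart_top) auto
  also have "\<dots> = Jmul {1..<n} (\<lambda>\<alpha>. (-1) ^ (d - k) * (Jmul {1..<n} ^^ (d - k)) (gam n d h k) \<alpha>)
      (\<lambda>i. a i + \<gamma> i)"
    using hpart_eq_alternating_Jmul_power[of "d - k"]
    by (intro Jmul_cong[OF _ _ mem]) (simp_all add: d_eq)
  also have "\<dots> = (-1) ^ (d - k) * (Jmul {1..<n} ^^ (d - k + 1)) (gam n d h k) (\<lambda>i. a i + \<gamma> i)"
    by (simp add: Jmul_cmult)
  finally show ?thesis .
qed

lemma Jmul_top_mem: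
  assumes "\<gamma> \<in> mons {1..<n} (d - k + 1)"
  shows "(\<lambda>i. a i + \<gamma> i) \<in> mons {0..<n} (d + 1)"
  using mons_mono[of "{0..<n}" "{1..<n}"] mons_add[OF a_mem assms] k_le_d by auto

lemma even_gap: "even (d - k)"
proof (rule ccontr)
  assume odd: "odd (d - k)"
  define \<gamma> where "\<gamma> = (\<lambda>_::nat. 0::nat)(1 := d - k + 1)"
  have zero_mem: "(\<lambda>_. 0) \<in> mons {1..<n} 0"
    by (simp add: mons_def)
  have \<gamma>: "\<gamma> \<in> mons {1..<n} (d - k + 1)"
    using mons_fun_upd_add[OF _ zero_mem, of 1 "d - k + 1"] n_ge_2 unfolding \<gamma>_def by simp
  have "(Jmul {1..<n} ^^ (d - k + 1)) (gam n d h k) (\<lambda>i. a i + \<gamma> i) > 0"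
    using Jmul_power_pos[where f = "gam n d h k", OF _ gam_k_nonneg a_mem a_pos \<gamma>] by simp
  then have "Jmul {0..<n} h (\<lambda>i. a i + \<gamma> i) < 0"
    using Jmul_top_eq[OF \<gamma>] odd by simp
  moreover have "Jmul {0..<n} h (\<lambda>i. a i + \<gamma> i) \<ge> 0"
    using Jmul_nonneg_top Jmul_top_mem[OF \<gamma>] by blast
  ultimately show False
    by linarith
qed

lemma Jmul_top_pos:
  assumes "\<gamma> \<in> mons {1..<n} (d - k + 1)"
  shows "Jmul {0..<n} h (\<lambda>i. a i + \<gamma> i) > 0"
proof -
  have "(-1 :: real) ^ (d - k) = 1"
    using even_gap by (rule neg_one_even_power)
  moreover have "(Jmul {1..<n} ^^ (d - k + 1)) (gam n d h k) (\<lambda>i. a i + \<gamma> i) > 0"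
    using Jmul_power_pos[where f = "gam n d h k", OF _ gam_k_nonneg a_mem a_pos assms] by simp
  ultimately show ?thesis
    unfolding Jmul_top_eq[OF assms] by simp
qed

lemma gap_ge_2:
  assumes "Nneg (mons {0..<n} d) h \<ge> 1"
  shows "2 \<le> d - k"
proof -
  have "{\<alpha> \<in> mons {0..<n} d. h \<alpha> < 0} \<noteq> {}"
    using assms by (metis Nneg_def card.empty not_one_le_zero)
  then obtain \<alpha> where \<alpha>: "\<alpha> \<in> mons {0..<n} d" "h \<alpha> < 0"
    by blast
  define j where "j = d - \<alpha> 0"
  have \<beta>: "\<alpha>(0 := 0) \<in> mons {1..<n} j" and "\<alpha> 0 \<le> d"
    using mons_drop_0[OF \<alpha>(1)] by (simp_all add: j_def)
  then have hpart_j: "hpart d h j (\<alpha>(0 := 0)) < 0"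
    using \<alpha>(2) by (simp add: hpart_def j_def)
  have "k \<le> j"
    using hpart_vanish_below[OF _ k_le_d \<beta>] hpart_j by (metis less_irrefl not_le)
  then have j_eq: "k + (j - k) = j"
    by simp
  have sign: "(-1) ^ (j - k) * hpart d h j (\<alpha>(0 := 0)) \<ge> 0"
    using hpart_alternating_sign[of "j - k" "\<alpha>(0 := 0)"] \<beta> unfolding j_eq by (simp add: j_def)
  have "odd (j - k)"
  proof
    assume "even (j - k)"
    then have "(-1 :: real) ^ (j - k) = 1"
      by (rule neg_one_even_power)
    then show False
      using sign hpart_j by simp
  qed
  moreover have "j \<le> d"
    by (simp add: j_def)
  ultimately show ?thesis
    using even_gap \<open>k \<le> j\<close> by presburger
qed

lemma Rnz_Jmul_ge:
  "card (mons {1..<n} (d - k + 1)) + 1 \<le> Rnz (mons {0..<n} (d + 1)) (Jmul {0..<n} h)"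
proof -
  define S where "S = {\<alpha> \<in> mons {0..<n} (d + 1). Jmul {0..<n} h \<alpha> \<noteq> 0}"
  define A where "A = (\<lambda>\<gamma> i. a i + \<gamma> i) ` mons {1..<n} (d - k + 1)"
  define p where "p = a(0 := d + 1 - k)"
  have "p \<in> mons {0..<n} (d + 1 - k + k)"
    unfolding p_def using n_ge_2 by (intro mons_lift_0 a_mem) simp
  moreover have "Jmul {0..<n} h p = gam n d h k a"
    unfolding p_def using n_ge_2 by (intro Jmul_lift_0_eq_gam a_mem k_le_d) simp
  ultimately have "p \<in> S"
    using k_le_d a_pos by (simp add: S_def)
  moreover have "A \<subseteq> S"
  proof
    fix x assume "x \<in> A"
    then obtain \<gamma> where \<gamma>: "\<gamma> \<in> mons {1..<n} (d - k + 1)" and x: "x = (\<lambda>i. a i + \<gamma> i)"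
      by (auto simp: A_def)
    show "x \<in> S"
      using Jmul_top_mem[OF \<gamma>] Jmul_top_pos[OF \<gamma>] by (simp add: S_def x)
  qed
  moreover have "p \<notin> A"
  proof
    assume "p \<in> A"
    then obtain \<gamma> where "\<gamma> \<in> mons {1..<n} (d - k + 1)" "p = (\<lambda>i. a i + \<gamma> i)"
      by (auto simp: A_def)
    then have "p 0 = 0"
      using a_mem by (simp add: mons_def)
    then show False
      using k_le_d by (simp add: p_def)
  qed
  moreover have "finite S"
    by (simp add: S_def finite_mons)
  ultimately have "card (insert p A) \<le> card S"
    by (intro card_mono) auto
  moreover have "card A = card (mons {1..<n} (d - k + 1))"
    unfolding A_def by (rule card_image) (auto simp: inj_on_def fun_eq_iff)
  ultimately show ?thesis
    using \<open>p \<notin> A\<close> \<open>A \<subseteq> S\<close> \<open>finite S\<close>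
    by (simp add: Rnz_def S_def finite_subset)
qed

end

end

theorem lemma5p3:
  fixes n d :: nat and h :: "(nat \<Rightarrow> nat) \<Rightarrow> real"
  assumes "n \<ge> 2" and "d \<ge> 2"
    and "Nneg (mons {0..<n} d) h \<ge> 1"
    and "\<forall>\<beta>\<in>mons {0..<n} (d + 1). Jmul {0..<n} h \<beta> \<ge> 0"
    and "\<exists>!i. i \<le> d \<and> Rnz (mons {1..<n} i) (gam n d h i) \<noteq> 0"
  shows "Rnz (mons {0..<n} (d + 1)) (Jmul {0..<n} h) \<ge> (n + 1 choose 3) + 1"
proof -
  obtain k where k: "k \<le> d" "Rnz (mons {1..<n} k) (gam n d h k) \<noteq> 0"
    and unique: "\<And>i. i \<le> d \<Longrightarrow> Rnz (mons {1..<n} i) (gam n d h i) \<noteq> 0 \<Longrightarrow> i = k"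
    using assms(5) by blast
  have gam_vanish: "gam n d h i \<beta> = 0" if "i \<le> d" "i \<noteq> k" "\<beta> \<in> mons {1..<n} i" for i \<beta>
    using unique[OF that(1)] that(2,3) by (auto simp: Rnz_def finite_mons)
  have "{\<alpha> \<in> mons {1..<n} k. gam n d h k \<alpha> \<noteq> 0} \<noteq> {}"
    using k(2) by (metis Rnz_def card.empty)
  then obtain a where a: "a \<in> mons {1..<n} k" "gam n d h k a \<noteq> 0"
    by blast
  then have a_pos: "gam n d h k a > 0"
    using gam_nonneg[OF _ assms(4) k(1) a(1)] assms(1) by simp
  note support = gam_vanish assms(1,4) k(1) a(1) a_pos
  have "(n + 1 choose 3) = card (mons {1..<n} 3)"
    using assms(1) by (simp add: card_mons numeral_3_eq_3)
  also have "\<dots> \<le> card (mons {1..<n} (d - k + 1))"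
    using gap_ge_2[where k = k and a = a, OF support assms(3)] assms(1)
    by (intro card_mons_mono[of _ 1]) auto
  finally show ?thesis
    using Rnz_Jmul_ge[where k = k and a = a, OF support] by linarith
qed

end
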